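(* Let $p\in(1,\infty)$ and let $G=(X,b,m,0)$ be a locally finite, $p$-hyperbolic model graph with respect to $x_0\in X$ (with potential $c=0$). Suppose that the curvature ratio $\kappa(r)=k_+(r)/k_-(r)>0$ is constant, equal to some $\kappa>1$, for all $r>r_0$, for some $r_0\in\mathbb{N}_0$. Then the Green's function $g$ with pole $x_0$ is radial and $$g(r)=\frac{1}{(\kappa^{1/(p-1)}-1)\,\partial B(r-1)^{1/(p-1)}},\qquad r>r_0,$$ where $g(r)$ denotes the value of $g$ on $S_r$.
   Context: Weighted graph $G=(X,b,m,c)$: $X$ countably infinite; $b$ symmetric, nonnegative, zero on the diagonal, $\sum_yb(x,y)<\infty$; $m>0$; $c\ge0$; $x\sim y$ iff $b(x,y)>0$; $X$ connected; locally finite: each vertex has finitely many neighbours. $\mathcal{E}_p(f)=\frac12\sum_{x,y}b(x,y)|f(x)-f(y)|^p+\sum_xc(x)|f(x)|^p$; $p$-hyperbolic means $\inf\{\mathcal{E}_p(\varphi):\varphi\text{ finitely supported},\varphi\ge1\text{ on }K\}>0$ for some finite $K$. $d$ is the combinatorial graph distance, $S_r=\{x:d(x_0,x)=r\}$, $\partial B(r)=\sum_{x\in S_r,y\in S_{r+1}}b(x,y)$. $k_\pm(x)=\frac1{m(x)}\sum_{y\sim x,\,d(x_0,y)=d(x_0,x)\pm1}b(x,y)$; $G$ is a model graph with respect to $x_0$ if $k_\pm$ and $c/m$ are constant on each sphere $S_r$, and $k_\pm(r)$ denotes this value. $a^{\langle p-1\rangle}=|a|^{p-2}a$, $\Delta_pf(x)=\frac1{m(x)}\sum_yb(x,y)(f(x)-f(y))^{\langle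 p-1\rangle}$. The Green's function with pole $x_0$ is the minimal positive solution $g$ of $\Delta_pg=\frac1m\mathds{1}_{x_0}$ on $X$. *)

theory Defs
  imports "HOL-Analysis.Analysis"
begin

text \<open>Weighted graphs on the vertex type 'a (the vertex set X is UNIV :: 'a set).
  b : edge weights, m : vertex measure, c : potential.\<close>

definition adj_rel :: "('a \<Rightarrow> 'a \<Rightarrow> real) \<Rightarrow> ('a \<times> 'a) set" where
  "adj_rel b = {(x, y). b x y > 0}"

definition weighted_graph :: "('a \<Rightarrow> 'a \<Rightarrow> real) \<Rightarrow> ('a \<Rightarrow> real) \<Rightarrow> ('a \<Rightarrow> real) \<Rightarrow> bool" where
  "weighted_graph b m c \<longleftrightarrow>
     countable (UNIV :: 'a set) \<and> infinite (UNIV :: 'a set) \<and>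
     (\<forall>x y. b x y = b y x) \<and> (\<forall>x y. b x y \<ge> 0) \<and> (\<forall>x. b x x = 0) \<and>
     (\<forall>x. (\<lambda>y. b x y) summable_on UNIV) \<and>
     (\<forall>x. m x > 0) \<and> (\<forall>x. c x \<ge> 0) \<and>
     (\<forall>x y. (x, y) \<in> (adj_rel b)\<^sup>*)"

definition locally_finite :: "('a \<Rightarrow> 'a \<Rightarrow> real) \<Rightarrow> bool" where
  "locally_finite b \<longleftrightarrow> (\<forall>x. finite {y. b x y > 0})"

definition gdist :: "('a \<Rightarrow> 'a \<Rightarrow> real) \<Rightarrow> 'a \<Rightarrow> 'a \<Rightarrow> nat" where
  "gdist b x y = (LEAST n. (x, y) \<in> (adj_rel b) ^^ n)"

definition sphere_g :: "('a \<Rightarrow> 'a \<Rightarrow> real) \<Rightarrow> 'a \<Rightarrow> nat \<Rightarrow> 'a set" where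
  "sphere_g b x0 r = {x. gdist b x0 x = r}"

definition boundary_B :: "('a \<Rightarrow> 'a \<Rightarrow> real) \<Rightarrow> 'a \<Rightarrow> nat \<Rightarrow> real" where
  "boundary_B b x0 r = (\<Sum>(x, y) \<in> sphere_g b x0 r \<times> sphere_g b x0 (Suc r). b x y)"

definition k_plus :: "('a \<Rightarrow> 'a \<Rightarrow> real) \<Rightarrow> ('a \<Rightarrow> real) \<Rightarrow> 'a \<Rightarrow> 'a \<Rightarrow> real" where
  "k_plus b m x0 x =
     (1 / m x) * (\<Sum>y \<in> {y. b x y > 0 \<and> gdist b x0 y = gdist b x0 x + 1}. b x y)"

definition k_minus :: "('a \<Rightarrow> 'a \<Rightarrow> real) \<Rightarrow> ('a \<Rightarrow> real) \<Rightarrow> 'a \<Rightarrow> 'a \<Rightarrow> real" where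
  "k_minus b m x0 x =
     (1 / m x) * (\<Sum>y \<in> {y. b x y > 0 \<and> int (gdist b x0 y) = int (gdist b x0 x) - 1}. b x y)"

definition model_graph :: "('a \<Rightarrow> 'a \<Rightarrow> real) \<Rightarrow> ('a \<Rightarrow> real) \<Rightarrow> ('a \<Rightarrow> real) \<Rightarrow> 'a \<Rightarrow> bool" where
  "model_graph b m c x0 \<longleftrightarrow>
     (\<forall>x y. gdist b x0 x = gdist b x0 y \<longrightarrow>
        k_plus b m x0 x = k_plus b m x0 y \<and> k_minus b m x0 x = k_minus b m x0 y \<and>
        c x / m x = c y / m y)"

definition energy_p :: "('a \<Rightarrow> 'a \<Rightarrow> real) \<Rightarrow> ('a \<Rightarrow> real) \<Rightarrow> real \<Rightarrow> ('a \<Rightarrow> real) \<Rightarrow> real" where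
  "energy_p b c p f =
     (1/2) * (\<Sum>\<^sub>\<infinity>(x, y) \<in> UNIV. b x y * \<bar>f x - f y\<bar> powr p)
     + (\<Sum>\<^sub>\<infinity>x \<in> UNIV. c x * \<bar>f x\<bar> powr p)"

definition p_hyperbolic :: "('a \<Rightarrow> 'a \<Rightarrow> real) \<Rightarrow> ('a \<Rightarrow> real) \<Rightarrow> real \<Rightarrow> bool" where
  "p_hyperbolic b c p \<longleftrightarrow>
     (\<exists>K. finite K \<and>
        (INF \<phi> \<in> {\<phi> :: 'a \<Rightarrow> real. finite {x. \<phi> x \<noteq> 0} \<and> (\<forall>x \<in> K. \<phi> x \<ge> 1)}.
           energy_p b c p \<phi>) > 0)"

definition sgnpow :: "real \<Rightarrow> real \<Rightarrow> real" where
  "sgnpow a q = \<bar>a\<bar> powr (q - 1) * a"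

definition p_laplacian :: "('a \<Rightarrow> 'a \<Rightarrow> real) \<Rightarrow> ('a \<Rightarrow> real) \<Rightarrow> real \<Rightarrow> ('a \<Rightarrow> real) \<Rightarrow> 'a \<Rightarrow> real" where
  "p_laplacian b m p f x =
     (1 / m x) * (\<Sum>\<^sub>\<infinity>y \<in> UNIV. b x y * sgnpow (f x - f y) (p - 1))"

definition green_eq :: "('a \<Rightarrow> 'a \<Rightarrow> real) \<Rightarrow> ('a \<Rightarrow> real) \<Rightarrow> real \<Rightarrow> 'a \<Rightarrow> ('a \<Rightarrow> real) \<Rightarrow> bool" where
  "green_eq b m p x0 g \<longleftrightarrow>
     (\<forall>x. g x > 0) \<and>
     (\<forall>x. p_laplacian b m p g x = (if x = x0 then 1 / m x else 0))"

definition is_green_function :: "('a \<Rightarrow> 'a \<Rightarrow> real) \<Rightarrow> ('a \<Rightarrow> real) \<Rightarrow> real \<Rightarrow> 'a \<Rightarrow> ('a \<Rightarrow> real) \<Rightarrow> bool" where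
  "is_green_function b m p x0 g \<longleftrightarrow>
     green_eq b m p x0 g \<and> (\<forall>h. green_eq b m p x0 h \<longrightarrow> (\<forall>x. g x \<le> h x))"

end

theory Submission
  imports Defs
begin

(* On a model graph the p-Laplacian of a radial function G(d(x0,x)) only sees the two flux terms
   k_+(r) (G(r) - G(r+1))^<p-1> and k_-(r) (G(r-1) - G(r))^<p-1>, and
   k_+(r) m(S_r) = dB(r) = k_-(r+1) m(S_(r+1)).  Hence every radial G with
   G(r) - G(r+1) = dB(r)^(-1/(p-1)) solves the Green equation: the flux through each sphere is 1.
   Choosing G(r) = sum_(j >= r) dB(j)^(-1/(p-1)), which is finite because dB grows geometrically
   with ratio kappa beyond r0, makes G vanish at infinity; a strong maximum principle then puts it
   below every positive solution, so it is the Green's function, and summing the geometric series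
   gives the closed form. *)

lemma sgnpow_eq_sgn_mult_powr: "sgnpow a q = sgn a * \<bar>a\<bar> powr q"
proof (cases "a = 0")
  case False
  then have "\<bar>a\<bar> powr q = \<bar>a\<bar> powr (q - 1) * \<bar>a\<bar>"
    using powr_add[of "\<bar>a\<bar>" "q - 1" 1] by simp
  then show ?thesis
    unfolding sgnpow_def using False by (simp add: sgn_if)
qed (simp add: sgnpow_def)

lemma sgnpow_minus: "sgnpow (- a) q = - sgnpow a q"
  by (simp add: sgnpow_def)

lemma strict_mono_sgnpow:
  assumes "0 < q"
  shows "strict_mono (\<lambda>a. sgnpow a q)"
proof (rule strict_monoI)
  fix a c :: real
  assume "a < c"
  consider "0 \<le> a" | "a < 0" "c \<le> 0" | "a < 0" "0 < c" by linarith
  then show "sgnpow a q < sgnpow c q"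
  proof cases
    case 1
    with \<open>a < c\<close> \<open>0 < q\<close> have "\<bar>a\<bar> powr q < \<bar>c\<bar> powr q"
      by (intro powr_less_mono2) auto
    with 1 \<open>a < c\<close> show ?thesis
      unfolding sgnpow_eq_sgn_mult_powr by (cases "a = 0") auto
  next
    case 2
    with \<open>a < c\<close> \<open>0 < q\<close> have "\<bar>c\<bar> powr q < \<bar>a\<bar> powr q"
      by (intro powr_less_mono2) auto
    with 2 show ?thesis
      unfolding sgnpow_eq_sgn_mult_powr by (cases "c = 0") auto
  next
    case 3
    then have "sgnpow a q = - (\<bar>a\<bar> powr q)" and "sgnpow c q = \<bar>c\<bar> powr q"
      unfolding sgnpow_eq_sgn_mult_powr by simp_all
    moreover have "0 < \<bar>a\<bar> powr q" and "0 < \<bar>c\<bar> powr q"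
      using 3 by simp_all
    ultimately show ?thesis
      by linarith
  qed
qed

lemma sgnpow_inverse_root:
  assumes "0 < q" and "0 < D"
  shows "sgnpow (1 / D powr (1 / q)) q = 1 / D"
proof -
  have "(1 / D powr (1 / q)) powr q = 1 / D"
    using assms by (simp add: powr_divide powr_powr)
  then show ?thesis
    unfolding sgnpow_eq_sgn_mult_powr using assms by simp
qed

lemma powr_geometric_sums:
  fixes \<kappa> q D :: real
  assumes "1 < \<kappa>" and "0 < q" and "0 < D"
  shows "(\<lambda>j. 1 / (\<kappa> ^ Suc j * D) powr q) sums (1 / ((\<kappa> powr q - 1) * D powr q))"
proof -
  define t where "t = \<kappa> powr q"
  have "1 < t"
    unfolding t_def using assms powr_less_mono[of 0 q \<kappa>] by simp
  have summand: "1 / (\<kappa> ^ Suc j * D) powr q = 1 / D powr q * ((1 / t) * (1 / t) ^ j)" for j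
    using assms
    by (simp add: t_def powr_mult powr_realpow[symmetric] powr_powr power_one_over
        flip: powr_power)
  have "(\<lambda>j. (1 / t) ^ j) sums (1 / (1 - 1 / t))"
    using \<open>1 < t\<close> by (intro geometric_sums) simp
  from sums_mult[OF sums_mult[OF this, of "1 / t"], of "1 / D powr q"]
  have "(\<lambda>j. 1 / D powr q * ((1 / t) * (1 / t) ^ j)) sums
      (1 / D powr q * ((1 / t) * (1 / (1 - 1 / t))))" .
  also have "1 / D powr q * ((1 / t) * (1 / (1 - 1 / t))) = 1 / ((t - 1) * D powr q)"
    using \<open>1 < t\<close> by (simp add: field_simps)
  finally show ?thesis
    unfolding summand t_def[symmetric] .
qed

lemma suminf_tail_diff:
  fixes a :: "nat \<Rightarrow> real"
  assumes "summable a"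
  shows "(\<Sum>j. a (j + r)) - (\<Sum>j. a (j + Suc r)) = a r"
  using suminf_split_head[OF summable_ignore_initial_segment[OF assms, of r]] by simp

lemma is_green_function_unique:
  assumes "is_green_function b m p x0 g" and "is_green_function b m p x0 h"
  shows "g = h"
  using assms unfolding is_green_function_def by (blast intro: order_antisym)

locale rooted_graph =
  fixes b :: "'a \<Rightarrow> 'a \<Rightarrow> real" and m :: "'a \<Rightarrow> real" and c :: "'a \<Rightarrow> real" and x0 :: 'a
  assumes weighted_graph: "weighted_graph b m c"
    and locally_finite: "locally_finite b"
begin

abbreviation d :: "'a \<Rightarrow> nat" where "d \<equiv> gdist b x0"
abbreviation S :: "nat \<Rightarrow> 'a set" where "S \<equiv> sphere_g b x0"
abbreviation dB :: "nat \<Rightarrow> real" where "dB \<equiv> boundary_B b x0"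

lemma b_sym: "b x y = b y x"
  and b_nonneg: "0 \<le> b x y"
  and m_pos: "0 < m x"
  and connected: "(x, y) \<in> (adj_rel b)\<^sup>*"
  and infinite_UNIV: "infinite (UNIV :: 'a set)"
  using weighted_graph unfolding weighted_graph_def by blast+

lemma finite_neighbours: "finite {y. 0 < b x y}"
  using locally_finite unfolding locally_finite_def by blast

lemma relpow_gdist: "(x0, x) \<in> adj_rel b ^^ d x"
proof -
  obtain n where "(x0, x) \<in> adj_rel b ^^ n"
    using connected rtrancl_power by blast
  then show ?thesis
    unfolding gdist_def by (rule LeastI)
qed

lemma gdist_le: "(x0, x) \<in> adj_rel b ^^ n \<Longrightarrow> d x \<le> n"
  unfolding gdist_def by (rule Least_le)

lemma gdist_eq_0_iff [simp]: "d x = 0 \<longleftrightarrow> x = x0"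
  using relpow_gdist[of x] gdist_le[of x0 0] by auto

lemma gdist_root [simp]: "d x0 = 0"
  by simp

lemma gdist_edge: "0 < b x y \<Longrightarrow> d y \<le> Suc (d x)"
proof -
  assume "0 < b x y"
  then have "(x, y) \<in> adj_rel b"
    unfolding adj_rel_def by simp
  with relpow_gdist[of x] have "(x0, y) \<in> adj_rel b ^^ Suc (d x)"
    by auto
  then show ?thesis
    by (rule gdist_le)
qed

lemma gdist_predecessor:
  assumes "x \<noteq> x0"
  obtains z where "0 < b z x" and "Suc (d z) = d x"
proof -
  from assms obtain k where k: "d x = Suc k"
    using not0_implies_Suc by fastforce
  with relpow_gdist[of x] obtain z where "(x0, z) \<in> adj_rel b ^^ k" and "(z, x) \<in> adj_rel b"
    by (metis relpow_Suc_E)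
  then have "0 < b z x" and "d z \<le> k"
    by (auto simp: adj_rel_def intro: gdist_le)
  with k gdist_edge[of z x] show ?thesis
    using that by simp
qed

lemma mem_sphere_iff [simp]: "x \<in> S r \<longleftrightarrow> d x = r"
  unfolding sphere_g_def by simp

lemma sphere_0: "S 0 = {x0}"
  by auto

lemma finite_sphere: "finite (S r)"
proof (induction r)
  case 0
  then show ?case
    by (simp add: sphere_0)
next
  case (Suc r)
  have "S (Suc r) \<subseteq> (\<Union>z\<in>S r. {y. 0 < b z y})"
  proof
    fix x
    assume "x \<in> S (Suc r)"
    then have "d x = Suc r" and "x \<noteq> x0"
      by auto
    from \<open>x \<noteq> x0\<close> obtain z where "0 < b z x" and "Suc (d z) = d x"
      by (rule gdist_predecessor)
    with \<open>d x = Suc r\<close> show "x \<in> (\<Union>z\<in>S r. {y. 0 < b z y})"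
      by auto
  qed
  then show ?case
    using Suc finite_neighbours by (blast intro: finite_subset)
qed

lemma finite_ball: "finite {x. d x < R}"
proof -
  have "{x. d x < R} = (\<Union>r<R. S r)"
    by auto
  then show ?thesis
    using finite_sphere by simp
qed

lemma gdist_descend: "d x = r + n \<Longrightarrow> \<exists>y. d y = r"
proof (induction n arbitrary: x)
  case (Suc n)
  then have "x \<noteq> x0"
    by auto
  then obtain z where "Suc (d z) = d x"
    by (rule gdist_predecessor)
  with Suc show ?case
    by auto
qed auto

lemma ex_gdist_eq: "\<exists>x. d x = r"
proof -
  obtain x where "x \<notin> {x. d x < r}"
    using finite_ball[of r] infinite_UNIV by (metis UNIV_I finite_subset subsetI)
  then have "d x = r + (d x - r)"
    by auto
  then show ?thesis
    by (rule gdist_descend)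
qed

lemma sum_sphere_m_pos: "0 < (\<Sum>y\<in>S r. m y)"
  using finite_sphere ex_gdist_eq[of r] m_pos by (intro sum_pos) auto

lemma boundary_B_eq_sum: "dB r = (\<Sum>x\<in>S r. \<Sum>y\<in>S (Suc r). b x y)"
  unfolding boundary_B_def by (simp add: sum.cartesian_product)

lemma boundary_B_pos: "0 < dB r"
proof -
  obtain y where y: "d y = Suc r"
    using ex_gdist_eq by blast
  then have "y \<noteq> x0"
    by auto
  then obtain z where z: "0 < b z y" "Suc (d z) = d y"
    by (rule gdist_predecessor)
  have "0 < (\<Sum>(x, y) \<in> S r \<times> S (Suc r). b x y)"
    using y z finite_sphere b_nonneg by (intro sum_pos2[where i = "(z, y)"]) auto
  then show ?thesis
    unfolding boundary_B_def .
qed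

lemma k_plus_eq_sum: "k_plus b m x0 x = (\<Sum>y | 0 < b x y \<and> d y = Suc (d x). b x y) / m x"
  unfolding k_plus_def by simp

lemma k_minus_eq_sum: "k_minus b m x0 x = (\<Sum>y | 0 < b x y \<and> Suc (d y) = d x. b x y) / m x"
proof -
  have "{y. 0 < b x y \<and> int (d y) = int (d x) - 1} = {y. 0 < b x y \<and> Suc (d y) = d x}"
    by auto
  then show ?thesis
    unfolding k_minus_def by simp
qed

lemma sum_outward_edges: "(\<Sum>y\<in>S (Suc (d x)). b x y) = m x * k_plus b m x0 x"
proof -
  have "(\<Sum>y | 0 < b x y \<and> d y = Suc (d x). b x y) = (\<Sum>y\<in>S (Suc (d x)). b x y)"
    using finite_sphere b_nonneg
    by (intro sum.mono_neutral_left) (auto simp: order.order_iff_strict)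
  then show ?thesis
    unfolding k_plus_eq_sum using m_pos[of x] by simp
qed

lemma sum_inward_edges:
  assumes "d y = Suc r"
  shows "(\<Sum>x\<in>S r. b x y) = m y * k_minus b m x0 y"
proof -
  have "(\<Sum>x | 0 < b y x \<and> Suc (d x) = d y. b y x) = (\<Sum>x\<in>S r. b x y)"
    using assms finite_sphere b_nonneg b_sym
    by (intro sum.mono_neutral_cong_left) (auto simp: order.order_iff_strict)
  then show ?thesis
    unfolding k_minus_eq_sum using m_pos[of y] by simp
qed

lemma p_laplacian_eq_sum:
  "p_laplacian b m p f x = (\<Sum>y | 0 < b x y. b x y * sgnpow (f x - f y) (p - 1)) / m x"
proof -
  have "(\<Sum>\<^sub>\<infinity>y\<in>UNIV. b x y * sgnpow (f x - f y) (p - 1)) =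
      (\<Sum>\<^sub>\<infinity>y\<in>{y. 0 < b x y}. b x y * sgnpow (f x - f y) (p - 1))"
    using b_nonneg[of x] by (intro infsum_cong_neutral) (auto simp: order.order_iff_strict)
  then show ?thesis
    unfolding p_laplacian_def using finite_neighbours by simp
qed

lemma p_laplacian_eq_at_max_propagates:
  assumes "1 < p"
    and lap: "p_laplacian b m p u x = p_laplacian b m p h x"
    and max: "\<And>z. u z - h z \<le> u x - h x"
    and "0 < b x y"
  shows "u y - h y = u x - h x"
proof -
  define N where "N = {z. 0 < b x z}"
  define \<delta> where "\<delta> z = b x z * (sgnpow (u x - u z) (p - 1) - sgnpow (h x - h z) (p - 1))" for z
  have mono: "mono (\<lambda>a. sgnpow a (p - 1))"
    using strict_mono_sgnpow[of "p - 1"] \<open>1 < p\<close> by (simp add: strict_mono_mono)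
  have "(\<Sum>z\<in>N. \<delta> z) = 0"
    using lap m_pos[of x]
    unfolding p_laplacian_eq_sum \<delta>_def N_def by (simp add: right_diff_distrib sum_subtractf)
  moreover have "0 \<le> \<delta> z" for z
    using max[of z] monoD[OF mono, of "h x - h z" "u x - u z"] b_nonneg[of x z]
    unfolding \<delta>_def by simp
  ultimately have "\<delta> y = 0"
    using finite_neighbours \<open>0 < b x y\<close> by (simp add: N_def sum_nonneg_eq_0_iff)
  then have "sgnpow (u x - u y) (p - 1) = sgnpow (h x - h y) (p - 1)"
    using \<open>0 < b x y\<close> unfolding \<delta>_def by simp
  then have "u x - u y = h x - h y"
    using strict_mono_eq[OF strict_mono_sgnpow] \<open>1 < p\<close> by simp
  then show ?thesis
    by simp
qed

lemma comparison_vanishing_at_infinity: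
  assumes "1 < p"
    and lap: "\<And>x. p_laplacian b m p u x = p_laplacian b m p h x"
    and h_nonneg: "\<And>x. 0 \<le> h x"
    and vanishing: "\<And>e. 0 < e \<Longrightarrow> \<exists>R. \<forall>x. R \<le> d x \<longrightarrow> u x < e"
  shows "u x \<le> h x"
proof (rule ccontr)
  assume "\<not> u x \<le> h x"
  define w where "w y = u y - h y" for y
  obtain R where R: "\<forall>y. R \<le> d y \<longrightarrow> u y < u x - h x"
    using vanishing[of "u x - h x"] \<open>\<not> u x \<le> h x\<close> by auto
  have far: "w y < w x" if "R \<le> d y" for y
    using R that h_nonneg[of y] unfolding w_def by auto
  define U where "U = {y. d y < R}"
  have "finite U"
    unfolding U_def by (rule finite_ball)
  have "x \<in> U"
    using far[of x] unfolding U_def by (metis less_irrefl mem_Collect_eq not_le)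
  have "Max (w ` U) \<in> w ` U"
    using \<open>finite U\<close> \<open>x \<in> U\<close> by (intro Max_in) auto
  then obtain z where "z \<in> U" and "w z = Max (w ` U)"
    by (metis imageE)
  then have z_max: "w y \<le> w z" if "y \<in> U" for y
    using \<open>finite U\<close> that by simp
  have global_max: "w y \<le> w z" for y
  proof (cases "y \<in> U")
    case False
    then have "R \<le> d y"
      unfolding U_def by simp
    then show ?thesis
      using far[of y] z_max[OF \<open>x \<in> U\<close>] by linarith
  qed (rule z_max)
  have max_propagates: "w y = w z" if "(z, y) \<in> (adj_rel b)\<^sup>*" for y
    using that
  proof (induction rule: rtrancl_induct)
    case (step y y')
    then have "0 < b y y'"
      by (simp add: adj_rel_def)
    have "u t - h t \<le> u y - h y" for t
      using global_max[of t] step.IH unfolding w_def by simp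
    from p_laplacian_eq_at_max_propagates[OF \<open>1 < p\<close> lap this \<open>0 < b y y'\<close>]
    show ?case
      using step.IH unfolding w_def by simp
  qed simp
  obtain y where "d y = R"
    using ex_gdist_eq by blast
  then have "w y < w x"
    by (intro far) simp
  moreover have "w y = w z"
    using max_propagates connected by blast
  ultimately show False
    using z_max[OF \<open>x \<in> U\<close>] by linarith
qed

end

locale rooted_model_graph = rooted_graph +
  assumes model_graph: "model_graph b m c x0"
begin

lemma k_plus_radial: "d x = d y \<Longrightarrow> k_plus b m x0 x = k_plus b m x0 y"
  and k_minus_radial: "d x = d y \<Longrightarrow> k_minus b m x0 x = k_minus b m x0 y"
  using model_graph unfolding model_graph_def by blast+

lemma boundary_B_eq_k_plus: "dB (d x) = k_plus b m x0 x * (\<Sum>y\<in>S (d x). m y)"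
proof -
  have "dB (d x) = (\<Sum>z\<in>S (d x). m z * k_plus b m x0 x)"
    unfolding boundary_B_eq_sum
  proof (rule sum.cong[OF refl])
    fix z
    assume "z \<in> S (d x)"
    then show "(\<Sum>y\<in>S (Suc (d x)). b z y) = m z * k_plus b m x0 x"
      using sum_outward_edges[of z] k_plus_radial[of z x] by simp
  qed
  then show ?thesis
    by (simp add: sum_distrib_left mult.commute)
qed

lemma boundary_B_eq_k_minus:
  assumes "d x = Suc r"
  shows "dB r = k_minus b m x0 x * (\<Sum>y\<in>S (d x). m y)"
proof -
  have "dB r = (\<Sum>y\<in>S (Suc r). \<Sum>z\<in>S r. b z y)"
    unfolding boundary_B_eq_sum by (rule sum.swap)
  also have "\<dots> = (\<Sum>y\<in>S (d x). m y * k_minus b m x0 x)"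
  proof (rule sum.cong)
    fix y
    assume "y \<in> S (d x)"
    with assms show "(\<Sum>z\<in>S r. b z y) = m y * k_minus b m x0 x"
      using sum_inward_edges[of y r] k_minus_radial[of y x] by simp
  qed (simp add: assms)
  finally show ?thesis
    by (simp add: sum_distrib_left mult.commute)
qed

lemma k_plus_pos: "0 < k_plus b m x0 x"
  using boundary_B_eq_k_plus[of x] boundary_B_pos sum_sphere_m_pos
  by (metis zero_less_mult_pos2)

lemma k_minus_pos:
  assumes "x \<noteq> x0"
  shows "0 < k_minus b m x0 x"
proof -
  obtain r where "d x = Suc r"
    using assms not0_implies_Suc by fastforce
  then show ?thesis
    using boundary_B_eq_k_minus boundary_B_pos sum_sphere_m_pos
    by (metis zero_less_mult_pos2)
qed

lemma p_laplacian_radial: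
  assumes "1 < p"
    and step: "\<And>r. G r - G (Suc r) = 1 / dB r powr (1 / (p - 1))"
  shows "p_laplacian b m p (\<lambda>x. G (d x)) x = (if x = x0 then 1 / m x else 0)"
proof -
  have flux: "b x y * sgnpow (G (d x) - G (d y)) (p - 1) =
      (if d y = Suc (d x) then b x y / dB (d x) else 0) -
      (if Suc (d y) = d x then b x y / dB (d x - 1) else 0)" if edge: "0 < b x y" for y
  proof -
    have sgnpow_step: "sgnpow (G r - G (Suc r)) (p - 1) = 1 / dB r" for r
      unfolding step using \<open>1 < p\<close> boundary_B_pos by (simp add: sgnpow_inverse_root)
    consider "d y = Suc (d x)" | "d y = d x" | "Suc (d y) = d x"
      using gdist_edge[OF edge] gdist_edge[of y x] edge b_sym[of x y] by linarith
    then show ?thesis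
    proof cases
      case 1
      then show ?thesis
        using sgnpow_step[of "d x"] by simp
    next
      case 2
      then show ?thesis
        by (simp add: sgnpow_def)
    next
      case 3
      then have "d x = Suc (d y)"
        by simp
      then show ?thesis
        using sgnpow_step[of "d y"] sgnpow_minus[of "G (d y) - G (Suc (d y))"] by simp
    qed
  qed
  have lap: "p_laplacian b m p (\<lambda>x. G (d x)) x =
      k_plus b m x0 x / dB (d x) - k_minus b m x0 x / dB (d x - 1)"
    unfolding p_laplacian_eq_sum k_plus_eq_sum k_minus_eq_sum
    using finite_neighbours[of x]
    by (simp add: flux sum_subtractf sum.inter_filter[symmetric] sum_divide_distrib[symmetric]
        diff_divide_distrib conj_commute mult.commute)
  show ?thesis
  proof (cases "x = x0")
    case True
    have "k_minus b m x0 x0 = 0"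
      unfolding k_minus_eq_sum by simp
    moreover have "dB 0 = k_plus b m x0 x0 * m x0"
      using boundary_B_eq_k_plus[of x0] by (simp add: sphere_0)
    ultimately show ?thesis
      using lap True k_plus_pos[of x0] by simp
  next
    case False
    define M where "M = (\<Sum>y\<in>S (d x). m y)"
    have "0 < M"
      unfolding M_def by (rule sum_sphere_m_pos)
    from False obtain r where "d x = Suc r"
      using not0_implies_Suc by fastforce
    then have "dB (d x - 1) = k_minus b m x0 x * M"
      unfolding M_def using boundary_B_eq_k_minus by simp
    moreover have "dB (d x) = k_plus b m x0 x * M"
      unfolding M_def by (rule boundary_B_eq_k_plus)
    ultimately show ?thesis
      using lap False k_plus_pos[of x] k_minus_pos[OF False] \<open>0 < M\<close> by simp
  qed
qed

lemma is_green_function_tail_sum: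
  assumes "1 < p"
    and summable: "summable (\<lambda>r. 1 / dB r powr (1 / (p - 1)))"
  shows "is_green_function b m p x0 (\<lambda>x. \<Sum>j. 1 / dB (j + d x) powr (1 / (p - 1)))"
proof -
  define G where "G r = (\<Sum>j. 1 / dB (j + r) powr (1 / (p - 1)))" for r
  have "0 < 1 / dB j powr (1 / (p - 1))" for j
    using boundary_B_pos[of j] by simp
  then have G_pos: "0 < G r" for r
    unfolding G_def using summable by (intro suminf_pos summable_ignore_initial_segment)
  have "G r - G (Suc r) = 1 / dB r powr (1 / (p - 1))" for r
    unfolding G_def by (rule suminf_tail_diff[OF summable])
  then have lap: "p_laplacian b m p (\<lambda>x. G (d x)) x = (if x = x0 then 1 / m x else 0)" for x
    by (rule p_laplacian_radial[OF \<open>1 < p\<close>])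
  have "G (d x) \<le> h x" if "green_eq b m p x0 h" for h x
  proof (rule comparison_vanishing_at_infinity[OF \<open>1 < p\<close>])
    show "p_laplacian b m p (\<lambda>x. G (d x)) y = p_laplacian b m p h y" for y
      using that lap unfolding green_eq_def by simp
    show "0 \<le> h y" for y
      using that unfolding green_eq_def by (simp add: less_imp_le)
    show "\<exists>R. \<forall>y. R \<le> d y \<longrightarrow> G (d y) < e" if e: "0 < e" for e
    proof -
      obtain R where "\<forall>r\<ge>R. \<bar>G r\<bar> < e"
        using suminf_exist_split[OF e summable] unfolding G_def by auto
      then show ?thesis
        by (auto simp: abs_less_iff)
    qed
  qed
  with G_pos lap show ?thesis
    unfolding is_green_function_def green_eq_def G_def by blast
qed

lemma boundary_B_ratio:
  assumes ratio: "\<forall>x. r0 < d x \<longrightarrow> k_plus b m x0 x / k_minus b m x0 x = \<kappa>"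
    and "r0 < r"
  shows "dB r = \<kappa> * dB (r - 1)"
proof -
  obtain x where x: "d x = r"
    using ex_gdist_eq by blast
  with \<open>r0 < r\<close> have "x \<noteq> x0" and "d x = Suc (r - 1)"
    by auto
  then have "k_plus b m x0 x = \<kappa> * k_minus b m x0 x"
    using ratio \<open>r0 < r\<close> x k_minus_pos[of x] by (auto simp: field_simps)
  with x show ?thesis
    using boundary_B_eq_k_plus[of x] boundary_B_eq_k_minus[OF \<open>d x = Suc (r - 1)\<close>] by simp
qed

lemma boundary_B_geometric:
  assumes ratio: "\<forall>x. r0 < d x \<longrightarrow> k_plus b m x0 x / k_minus b m x0 x = \<kappa>"
    and "r0 < r"
  shows "dB (j + r) = \<kappa> ^ Suc j * dB (r - 1)"
proof (induction j)
  case 0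
  then show ?case
    using boundary_B_ratio[OF assms] by simp
next
  case (Suc j)
  then show ?case
    using boundary_B_ratio[OF ratio, of "Suc j + r"] \<open>r0 < r\<close> by simp
qed

end

theorem proposition4p9:
  fixes b :: "'a \<Rightarrow> 'a \<Rightarrow> real" and m :: "'a \<Rightarrow> real" and x0 :: 'a
    and p \<kappa> :: real and r0 :: nat and g :: "'a \<Rightarrow> real"
  assumes "p > 1"
    and "weighted_graph b m (\<lambda>_. 0)"
    and "locally_finite b"
    and "p_hyperbolic b (\<lambda>_. 0) p"
    and "model_graph b m (\<lambda>_. 0) x0"
    and "\<kappa> > 1"
    and "\<forall>x. gdist b x0 x > r0 \<longrightarrow> k_plus b m x0 x / k_minus b m x0 x = \<kappa>"
    and "is_green_function b m p x0 g"
  shows "(\<forall>x y. gdist b x0 x = gdist b x0 y \<longrightarrow> g x = g y) \<and>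
         (\<forall>x. gdist b x0 x > r0 \<longrightarrow>
            g x = 1 / ((\<kappa> powr (1 / (p - 1)) - 1)
                       * boundary_B b x0 (gdist b x0 x - 1) powr (1 / (p - 1))))"
proof -
  interpret rooted_model_graph b m "\<lambda>_. 0" x0
    using assms(2,3,5) by unfold_locales
  define q where "q = 1 / (p - 1)"
  have "0 < q"
    unfolding q_def using \<open>p > 1\<close> by simp
  have tail: "(\<lambda>j. 1 / dB (j + r) powr q) sums (1 / ((\<kappa> powr q - 1) * dB (r - 1) powr q))"
    if "r0 < r" for r
    using powr_geometric_sums[OF \<open>\<kappa> > 1\<close> \<open>0 < q\<close> boundary_B_pos]
    unfolding boundary_B_geometric[OF assms(7) that] .
  have "summable (\<lambda>r. 1 / dB r powr q)"
    using sums_summable[OF tail[of "Suc r0"]] summable_iff_shift by blast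
  then have "is_green_function b m p x0 (\<lambda>x. \<Sum>j. 1 / dB (j + d x) powr q)"
    unfolding q_def by (rule is_green_function_tail_sum[OF \<open>p > 1\<close>])
  then have g_eq: "g = (\<lambda>x. \<Sum>j. 1 / dB (j + d x) powr q)"
    by (rule is_green_function_unique[OF assms(8)])
  show ?thesis
    unfolding g_eq q_def[symmetric] using sums_unique[OF tail] by simp
qed

end
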